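(* Let $m$ be a positive integer and consider the equation \[ \cos\tfrac{2\pi j}{m}+\cos\tfrac{2\pi \ell}{m}=2\cos\tfrac{2\pi j}{m}\cos\tfrac{2\pi \ell}{m} \qquad (\ast)\] in unknowns $(j,\ell)\in\{0,\dots,m-1\}^2$. If $4\mid m$, then $(\ast)$ has at least $4$ non-trivial solutions. If $5\mid m$, then $(\ast)$ has at least $8$ non-trivial solutions.
   Context: The solution $(j,\ell)=(0,0)$ of $(\ast)$ is called trivial; all other solutions are non-trivial. *)

theory Defs
  imports Complex_Main
begin

definition sols :: "nat \<Rightarrow> (nat \<times> nat) set" where
  "sols m = {(j, l). j < m \<and> l < m \<and>
     cos (2 * pi * real j / real m) + cos (2 * pi * real l / real m)
       = 2 * cos (2 * pi * real j / real m) * cos (2 * pi * real l / real m)}"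

definition nontrivial_sols :: "nat \<Rightarrow> (nat \<times> nat) set" where
  "nontrivial_sols m = sols m - {(0, 0)}"

end

theory Submission
  imports Defs
begin

text \<open>The equation is invariant under swapping j and l and under j \<mapsto> m - j, and a
  solution for d yields one for every multiple k d by scaling both indices by k.
  So it suffices to exhibit one non-trivial solution for m = 4, namely (1, 1) since
  cos (\<pi>/2) = 0, and one for m = 5, namely (1, 2), which rests on the identity
  cos (2\<pi>/5) + cos (4\<pi>/5) = 2 cos (2\<pi>/5) cos (4\<pi>/5); their orbits under the
  symmetries have 4 and 8 elements respectively.\<close>

lemma finite_sols: "finite (sols m)"
proof (rule finite_subset)
  show "sols m \<subseteq> {..<m} \<times> {..<m}"
    unfolding sols_def by auto
qed auto

lemma finite_nontrivial_sols: "finite (nontrivial_sols m)"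
  unfolding nontrivial_sols_def using finite_sols by simp

lemma cos_root_reflect:
  assumes "j \<le> m"
  shows "cos (2 * pi * real (m - j) / real m) = cos (2 * pi * real j / real m)"
proof (cases "m = 0")
  case False
  then have "2 * pi * real (m - j) / real m = 2 * pi - 2 * pi * real j / real m"
    using assms by (simp add: field_simps)
  then show ?thesis
    by (simp add: cos_2pi_minus)
qed simp

lemma sols_swap: "(j, l) \<in> sols m \<Longrightarrow> (l, j) \<in> sols m"
  unfolding sols_def by (auto simp: algebra_simps)

lemma sols_reflect: "(j, l) \<in> sols m \<Longrightarrow> 0 < j \<Longrightarrow> (m - j, l) \<in> sols m"
  using cos_root_reflect[of j m] unfolding sols_def by auto

lemma sols_reflect_snd: "(j, l) \<in> sols m \<Longrightarrow> 0 < l \<Longrightarrow> (j, m - l) \<in> sols m"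
  using sols_reflect sols_swap by blast

lemma sols_scale:
  assumes "0 < k" and "(j, l) \<in> sols d"
  shows "(k * j, k * l) \<in> sols (k * d)"
proof -
  have "2 * pi * real (k * i) / real (k * d) = 2 * pi * real i / real d" for i
    using assms(1) by simp
  then show ?thesis
    using assms unfolding sols_def by (simp only: mem_Collect_eq prod.case) simp
qed

lemma card_nontrivial_sols_dvd_mono:
  assumes "d dvd m" and "0 < m"
  shows "card (nontrivial_sols d) \<le> card (nontrivial_sols m)"
proof -
  obtain k where m: "m = k * d"
    using assms(1) by (metis dvd_def mult.commute)
  with assms(2) have k: "0 < k"
    by simp
  let ?scale = "\<lambda>(j, l). (k * j, k * l)"
  have "inj_on ?scale (nontrivial_sols d)"
    using k by (auto simp: inj_on_def)
  moreover have "?scale ` nontrivial_sols d \<subseteq> nontrivial_sols m"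
    using k sols_scale unfolding m nontrivial_sols_def by auto
  ultimately show ?thesis
    using card_inj_on_le finite_nontrivial_sols by blast
qed

lemma one_one_in_sols_4: "(1, 1) \<in> sols 4"
proof -
  have "cos (2 * pi * real (1::nat) / real (4::nat)) = 0"
    using cos_pi_half by simp
  then show ?thesis
    unfolding sols_def by simp
qed

lemma cos_two_fifths_pi_identity:
  "cos (2 * pi / 5) + cos (4 * pi / 5) = 2 * cos (2 * pi / 5) * cos (4 * pi / 5)"
proof -
  have "cos (2 * pi / 5 + 4 * pi / 5) = cos (2 * pi - 4 * pi / 5)"
    by (rule arg_cong[where f = cos]) simp
  then have sum: "cos (2 * pi / 5 + 4 * pi / 5) = cos (4 * pi / 5)"
    by (simp only: cos_2pi_minus)
  have "cos (2 * pi / 5 - 4 * pi / 5) = cos (- (2 * pi / 5))"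
    by (rule arg_cong[where f = cos]) simp
  then have diff: "cos (2 * pi / 5 - 4 * pi / 5) = cos (2 * pi / 5)"
    by (simp only: cos_minus)
  have "cos (2 * pi / 5) * cos (4 * pi / 5) = (cos (2 * pi / 5) + cos (4 * pi / 5)) / 2"
    using cos_times_cos[of "2 * pi / 5" "4 * pi / 5"] by (simp only: sum diff)
  then show ?thesis
    by simp
qed

lemma one_two_in_sols_5: "(1, 2) \<in> sols 5"
  using cos_two_fifths_pi_identity unfolding sols_def by (simp add: mult.commute)

lemma card_nontrivial_sols_4: "4 \<le> card (nontrivial_sols 4)"
proof -
  have "(1, 1) \<in> sols 4" "(3, 1) \<in> sols 4" "(1, 3) \<in> sols 4" "(3, 3) \<in> sols 4"
    using one_one_in_sols_4 sols_reflect[of 1 _ 4] sols_reflect_snd[of _ 1 4] by auto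
  then have "{(1, 1), (3, 1), (1, 3), (3, 3)} \<subseteq> nontrivial_sols 4"
    unfolding nontrivial_sols_def by auto
  from card_mono[OF finite_nontrivial_sols this] show ?thesis
    by simp
qed

lemma card_nontrivial_sols_5: "8 \<le> card (nontrivial_sols 5)"
proof -
  have "(1, 2) \<in> sols 5" "(4, 2) \<in> sols 5" "(1, 3) \<in> sols 5" "(4, 3) \<in> sols 5"
    using one_two_in_sols_5 sols_reflect[of 1 _ 5] sols_reflect_snd[of _ 2 5] by auto
  then have "{(1, 2), (4, 2), (1, 3), (4, 3), (2, 1), (2, 4), (3, 1), (3, 4)} \<subseteq> nontrivial_sols 5"
    unfolding nontrivial_sols_def using sols_swap by auto
  from card_mono[OF finite_nontrivial_sols this] show ?thesis
    by simp
qed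

theorem lemmaA1:
  fixes m :: nat
  assumes "m > 0"
  shows "(4 dvd m \<longrightarrow> card (nontrivial_sols m) \<ge> 4) \<and>
         (5 dvd m \<longrightarrow> card (nontrivial_sols m) \<ge> 8)"
  using card_nontrivial_sols_4 card_nontrivial_sols_5
    card_nontrivial_sols_dvd_mono[OF _ assms] order_trans by blast

end
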